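(* Let $P(z,\bar z)=\sum_{j+k\leq n}\alpha_{j,k} z^j\bar z^k$ be an irreducible polyanalytic polynomial such that $|\alpha_{j,k}|\neq|\alpha_{k,j}|$ for some indices $j,k$. Then $P$ has only finitely many zeros in $\mathbb{C}$.
   Context: A polyanalytic polynomial is a function $\mathbb{C}\to\mathbb{C}$ of the form $P(z,\bar z)=\sum_{j+k\le n}\alpha_{j,k} z^j \bar z^{k}$ with complex coefficients (a polynomial in $z$ and $\bar z$); two such polynomials are equal iff all coefficients agree. Its degree is the largest $j+k$ with $\alpha_{j,k}\neq 0$. $P$ is called reducible if $P=P_1P_2$ for polyanalytic polynomials $P_1,P_2$ with $\deg(P_1),\deg(P_2)\geq 1$, and irreducible otherwise. A zero of $P$ is a point $z\in\mathbb{C}$ with $P(z,\bar z)=0$. *)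

theory Defs
  imports Complex_Main "HOL-Computational_Algebra.Polynomial"
begin

text \<open>A polyanalytic polynomial is represented as a bivariate polynomial
  P :: complex poly poly: the outer variable stands for z, the inner one for
  conj z. The coefficient alpha_{j,k} of z^j (conj z)^k is coeff (coeff P j) k.\<close>

definition pa_coeff :: "complex poly poly \<Rightarrow> nat \<Rightarrow> nat \<Rightarrow> complex" where
  "pa_coeff P j k = coeff (coeff P j) k"

definition pa_degree :: "complex poly poly \<Rightarrow> nat" where
  "pa_degree P = (if P = 0 then 0 else Max {j + k | j k. pa_coeff P j k \<noteq> 0})"

definition pa_eval :: "complex poly poly \<Rightarrow> complex \<Rightarrow> complex" where
  "pa_eval P z = (\<Sum>j\<le>degree P. \<Sum>k\<le>degree (coeff P j). pa_coeff P j k * z ^ j * cnj z ^ k)"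

definition pa_reducible :: "complex poly poly \<Rightarrow> bool" where
  "pa_reducible P \<longleftrightarrow> (\<exists>P1 P2. P = P1 * P2 \<and> pa_degree P1 \<ge> 1 \<and> pa_degree P2 \<ge> 1)"

definition pa_irreducible :: "complex poly poly \<Rightarrow> bool" where
  "pa_irreducible P \<longleftrightarrow> \<not> pa_reducible P"

end

theory Submission
  imports
    Defs
    "HOL-Computational_Algebra.Polynomial_Factorial"
    "HOL-Computational_Algebra.Field_as_Ring"
begin

text \<open>Let \<open>P\<^sup>*\<close> be the polyanalytic polynomial with coefficients \<open>cnj \<alpha>\<^sub>k\<^sub>,\<^sub>j\<close>; then
  \<open>P\<^sup>*(z, cnj z) = cnj (P(z, cnj z))\<close>, so every zero of \<open>P\<close> is a common zero of \<open>P\<close>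
  and \<open>P\<^sup>*\<close>. Regard both as polynomials in \<open>z\<close> over \<open>\<complex>[w]\<close>. If they have a common
  factor of positive \<open>z\<close>-degree, irreducibility makes \<open>P\<close> divide \<open>P\<^sup>*\<close>; conjugating
  back shows \<open>P\<^sup>* = c P\<close> with \<open>\<bar>c\<bar> = 1\<close>, whence \<open>\<bar>\<alpha>\<^sub>j\<^sub>,\<^sub>k\<bar> = \<bar>\<alpha>\<^sub>k\<^sub>,\<^sub>j\<bar>\<close> for all \<open>j, k\<close>.
  Otherwise an element of minimal \<open>z\<close>-degree of the ideal \<open>(P, P\<^sup>*)\<close> is a nonzero
  polynomial \<open>d(w)\<close>, and the zeros of \<open>P\<close> are among the conjugates of its finitely many
  roots.\<close>

lemma poly_const_combination_or_common_factor:
  fixes P Q :: "'a :: {factorial_ring_gcd, semiring_gcd_mult_normalize} poly"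
  assumes "P \<noteq> 0"
  obtains a b d where "d \<noteq> 0" "a * P + b * Q = [:d:]"
  | h where "degree h > 0" "h dvd P" "h dvd Q"
proof -
  define S where "S = {D. D \<noteq> 0 \<and> (\<exists>a b. D = a * P + b * Q)}"
  have "P = 1 * P + 0 * Q" by simp
  then have "P \<in> S" unfolding S_def using assms by blast
  then obtain D where "D \<in> S" and D_min: "\<And>D'. D' \<in> S \<Longrightarrow> degree D \<le> degree D'"
    using ex_has_least_nat[of "\<lambda>D. D \<in> S" P degree] by blast
  then obtain a b where "D \<noteq> 0" and D: "D = a * P + b * Q" unfolding S_def by blast
  show thesis
  proof (cases "degree D = 0")
    case True
    with \<open>D \<noteq> 0\<close> have "coeff D 0 \<noteq> 0" by (metis leading_coeff_0_iff)
    moreover have "a * P + b * Q = [:coeff D 0:]" using True D by (metis degree_0_id)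
    ultimately show thesis by (rule that(1))
  next
    case False
    \<comment> \<open>the pseudo-remainder of any \<open>F\<close> in the ideal by \<open>D\<close> lies in the ideal and has smaller
      degree than \<open>D\<close>, so it vanishes\<close>
    have "primitive_part D dvd F" if F: "F = a' * P + b' * Q" for F a' b'
    proof -
      obtain c q where "c \<noteq> 0" and c: "smult c F = D * q + pseudo_mod F D"
        and "pseudo_mod F D = 0 \<or> degree (pseudo_mod F D) < degree D"
        using pseudo_mod[OF \<open>D \<noteq> 0\<close>, of F] by blast
      moreover have "pseudo_mod F D = (smult c a' - q * a) * P + (smult c b' - q * b) * Q"
        using c unfolding F D by (simp add: algebra_simps smult_add_right)
      ultimately have "pseudo_mod F D = 0"
        using D_min[of "pseudo_mod F D"] unfolding S_def by force
      with c have "primitive_part D dvd primitive_part (smult c F)" by auto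
      also have "\<dots> = [:unit_factor c:] * primitive_part F"
        by (simp add: primitive_part_smult)
      also have "\<dots> dvd primitive_part F"
        by (rule mult_unit_dvd_iff'[THEN iffD2])
          (use \<open>c \<noteq> 0\<close> in \<open>simp_all add: is_unit_const_poly_iff unit_factor_is_unit\<close>)
      also have "primitive_part F dvd F"
        by (metis content_times_primitive_part dvd_smult dvd_refl)
      finally show ?thesis .
    qed
    from this[of P 1 0] this[of Q 0 1] show thesis
      using that(2)[of "primitive_part D"] False by simp
  qed
qed

lemma pa_ext: "(\<And>j k. pa_coeff A j k = pa_coeff B j k) \<Longrightarrow> A = B"
  unfolding pa_coeff_def by (simp add: poly_eq_iff)

lemma pa_coeff_mult:
  "pa_coeff (A * B) j k = (\<Sum>i\<le>j. \<Sum>l\<le>k. pa_coeff A i l * pa_coeff B (j - i) (k - l))"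
  unfolding pa_coeff_def coeff_mult by (simp add: coeff_sum coeff_mult)

lemma pa_eval_eq_poly: "pa_eval P z = poly (poly P [:z:]) (cnj z)"
proof -
  have "poly (poly P [:z:]) (cnj z) = (\<Sum>j\<le>degree P. poly (coeff P j) (cnj z) * z ^ j)"
    by (simp add: poly_altdef[of P] poly_sum poly_power)
  also have "\<dots> = pa_eval P z"
    unfolding pa_eval_def pa_coeff_def
    by (intro sum.cong refl) (simp add: poly_altdef sum_distrib_left sum_distrib_right mult_ac)
  finally show ?thesis by simp
qed

lemma finite_pa_degree_set: "finite {j + k | j k. pa_coeff P j k \<noteq> 0}"
proof -
  have "{(j, k). pa_coeff P j k \<noteq> 0} \<subseteq> (SIGMA j:{..degree P}. {..degree (coeff P j)})"
    unfolding pa_coeff_def by (auto intro: le_degree)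
  then have "finite {(j, k). pa_coeff P j k \<noteq> 0}" by (rule finite_subset) auto
  from finite_imageI[OF this, of "\<lambda>(j, k). j + k"] show ?thesis
    by (rule rev_finite_subset) auto
qed

lemma pa_coeff_nonzero_le_degree: "pa_coeff P j k \<noteq> 0 \<Longrightarrow> j + k \<le> pa_degree P"
  unfolding pa_degree_def using finite_pa_degree_set[of P]
  by (auto simp: pa_coeff_def intro!: Max_ge)

lemma pa_eval_eq_sum_square:
  assumes "\<And>j k. pa_coeff P j k \<noteq> 0 \<Longrightarrow> j \<le> N \<and> k \<le> N"
  shows "pa_eval P z = (\<Sum>j\<le>N. \<Sum>k\<le>N. pa_coeff P j k * z ^ j * cnj z ^ k)"
proof -
  have lead: "pa_coeff P j (degree (coeff P j)) \<noteq> 0" if "coeff P j \<noteq> 0" for j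
    using that unfolding pa_coeff_def by simp
  have "degree (coeff P j) \<le> N" for j
    using assms[OF lead, of j] by (cases "coeff P j = 0") auto
  moreover have "degree P \<le> N"
    using assms[OF lead, of "degree P"] by (cases "P = 0") auto
  ultimately show ?thesis
    unfolding pa_eval_def
    by (intro sum.mono_neutral_cong_left) (auto simp: pa_coeff_def coeff_eq_0)
qed

definition pa_conj :: "complex poly poly \<Rightarrow> complex poly poly" where
  "pa_conj P = (\<Sum>j\<le>pa_degree P. monom (\<Sum>k\<le>pa_degree P. monom (cnj (pa_coeff P k j)) k) j)"

lemma pa_coeff_pa_conj: "pa_coeff (pa_conj P) j k = cnj (pa_coeff P k j)"
proof -
  have "pa_coeff (pa_conj P) j k =
      (if j \<le> pa_degree P \<and> k \<le> pa_degree P then cnj (pa_coeff P k j) else 0)"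
    unfolding pa_conj_def pa_coeff_def by (simp add: coeff_sum coeff_monom)
  also have "\<dots> = cnj (pa_coeff P k j)"
    using pa_coeff_nonzero_le_degree[of P k j] by (cases "pa_coeff P k j = 0") auto
  finally show ?thesis .
qed

lemma pa_conj_pa_conj [simp]: "pa_conj (pa_conj P) = P"
  by (rule pa_ext) (simp add: pa_coeff_pa_conj)

lemma pa_conj_mult: "pa_conj (A * B) = pa_conj A * pa_conj B"
  by (rule pa_ext, unfold pa_coeff_pa_conj pa_coeff_mult) (simp add: cnj_sum, subst sum.swap, simp)

lemma pa_conj_const: "pa_conj [:[:c:]:] = [:[:cnj c:]:]"
  by (rule pa_ext, unfold pa_coeff_pa_conj) (auto simp: pa_coeff_def coeff_pCons split: nat.split)

lemma pa_eval_pa_conj: "pa_eval (pa_conj P) z = cnj (pa_eval P z)"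
proof -
  have bound: "j \<le> pa_degree P \<and> k \<le> pa_degree P" if "pa_coeff P j k \<noteq> 0" for j k
    using pa_coeff_nonzero_le_degree[OF that] by simp
  have "pa_eval (pa_conj P) z =
      (\<Sum>j\<le>pa_degree P. \<Sum>k\<le>pa_degree P. pa_coeff (pa_conj P) j k * z ^ j * cnj z ^ k)"
    by (rule pa_eval_eq_sum_square) (auto simp: pa_coeff_pa_conj dest: bound)
  moreover have "pa_eval P z =
      (\<Sum>j\<le>pa_degree P. \<Sum>k\<le>pa_degree P. pa_coeff P j k * z ^ j * cnj z ^ k)"
    by (rule pa_eval_eq_sum_square) (auto dest: bound)
  ultimately show ?thesis
    by (simp add: cnj_sum pa_coeff_pa_conj) (subst sum.swap, simp add: mult_ac)
qed

lemma finite_pa_zeros_if_const_combination: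
  assumes "a * P + b * pa_conj P = [:d:]" and "d \<noteq> 0"
  shows "finite {z. pa_eval P z = 0}"
proof -
  have "{z. pa_eval P z = 0} \<subseteq> cnj ` {x. poly d x = 0}"
  proof
    fix z assume "z \<in> {z. pa_eval P z = 0}"
    then have "pa_eval P z = 0" and "pa_eval (pa_conj P) z = 0"
      by (simp_all add: pa_eval_pa_conj)
    then have "pa_eval [:d:] z = 0"
      unfolding assms(1)[symmetric] by (simp add: pa_eval_eq_poly)
    then show "z \<in> cnj ` {x. poly d x = 0}"
      by (intro image_eqI[of _ _ "cnj z"]) (simp_all add: pa_eval_eq_poly)
  qed
  moreover have "finite {x. poly d x = 0}"
    using \<open>d \<noteq> 0\<close> by (rule poly_roots_finite)
  ultimately show ?thesis by (metis finite_imageI finite_subset)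
qed

lemma degree_le_pa_degree: "degree P \<le> pa_degree P"
proof (cases "P = 0")
  case False
  then have "pa_coeff P (degree P) (degree (lead_coeff P)) \<noteq> 0"
    unfolding pa_coeff_def by simp
  then show ?thesis using pa_coeff_nonzero_le_degree by fastforce
qed simp

lemma pa_degree_eq_0_imp_unit:
  assumes "pa_degree R = 0" and "R \<noteq> 0"
  shows "is_unit R"
proof -
  have R: "R = [:[:pa_coeff R 0 0:]:]"
  proof (rule pa_ext)
    fix j k
    have "pa_coeff R j k = 0" if "j + k > 0"
      using pa_coeff_nonzero_le_degree[of R j k] that assms(1) by auto
    then show "pa_coeff R j k = pa_coeff [:[:pa_coeff R 0 0:]:] j k"
      by (cases j; cases k) (auto simp: pa_coeff_def)
  qed
  with assms(2) have "pa_coeff R 0 0 \<noteq> 0" by auto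
  then show ?thesis by (subst R) (simp add: is_unit_poly_iff dvd_field_iff)
qed

lemma pa_irreducible_dvdD:
  assumes "pa_irreducible P" and "P \<noteq> 0" and "h dvd P" and "degree h > 0"
  shows "P dvd h"
proof -
  from \<open>h dvd P\<close> obtain R where P: "P = h * R" by (elim dvdE)
  have "pa_degree h \<ge> 1"
    using degree_le_pa_degree[of h] \<open>degree h > 0\<close> by linarith
  with assms(1) P have "pa_degree R = 0"
    unfolding pa_irreducible_def pa_reducible_def by force
  moreover have "R \<noteq> 0" using P \<open>P \<noteq> 0\<close> by auto
  ultimately have "is_unit R" by (rule pa_degree_eq_0_imp_unit)
  then show ?thesis unfolding P by (simp add: mult_unit_dvd_iff)
qed

lemma norm_pa_coeff_swap_if_dvd_pa_conj:
  assumes "P dvd pa_conj P"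
  shows "norm (pa_coeff P j k) = norm (pa_coeff P k j)"
proof (cases "P = 0")
  case False
  from assms obtain T where T: "pa_conj P = P * T" by (elim dvdE)
  have "P * 1 = pa_conj (pa_conj P)" by simp
  also have "\<dots> = P * (T * pa_conj T)" by (simp add: T pa_conj_mult mult.assoc)
  finally have unit: "T * pa_conj T = 1" using False by simp
  then obtain c where c: "T = [:[:c:]:]"
    by (metis dvdI is_unit_poly_iff)
  from unit have "c * cnj c = 1"
    unfolding c pa_conj_const by (simp add: one_pCons)
  then have "norm c * norm c = 1"
    by (metis complex_mod_cnj norm_mult norm_one)
  then have "norm c = 1"
    using norm_ge_zero[of c] by (auto simp: square_eq_1_iff)
  have "cnj (pa_coeff P k j) = c * pa_coeff P j k"
    using pa_coeff_pa_conj[of P j k] unfolding T c by (simp add: pa_coeff_def)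
  then have "norm (pa_coeff P k j) = norm c * norm (pa_coeff P j k)"
    by (metis complex_mod_cnj norm_mult)
  with \<open>norm c = 1\<close> show ?thesis by simp
qed (simp add: pa_coeff_def)

theorem theorem2p9:
  fixes P :: "complex poly poly"
  assumes "pa_irreducible P"
    and "\<exists>j k. norm (pa_coeff P j k) \<noteq> norm (pa_coeff P k j)"
  shows "finite {z. pa_eval P z = 0}"
proof -
  from assms(2) obtain j k where asym: "norm (pa_coeff P j k) \<noteq> norm (pa_coeff P k j)"
    by blast
  then have "P \<noteq> 0" by (auto simp: pa_coeff_def)
  then show ?thesis
  proof (cases rule: poly_const_combination_or_common_factor[where Q = "pa_conj P"])
    case (1 a b d)
    then show ?thesis by (intro finite_pa_zeros_if_const_combination)
  next
    case (2 h)
    have "P dvd h"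
      using assms(1) \<open>P \<noteq> 0\<close> \<open>h dvd P\<close> \<open>degree h > 0\<close> by (rule pa_irreducible_dvdD)
    with \<open>h dvd pa_conj P\<close> have "P dvd pa_conj P" by (rule dvd_trans[rotated])
    with asym show ?thesis using norm_pa_coeff_swap_if_dvd_pa_conj by blast
  qed
qed

end
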